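(* Let $\mathsf{Prop}=\{p\}$, $\mathsf{Act}=\{a,b,c,d,e\}$, $\mathsf{Op}_{[\cdot]}=\{[\alpha]:\alpha\in\mathsf{Act}\}$ and $\mathsf{Op}_{\langle\cdot\rangle}=\{\langle\alpha\rangle^{\ge1}:\alpha\in\mathsf{Act}\}$. Let $\mathsf{L}'$ be a monotone fragment of $\mathsf{ML}(\mathsf{Prop},\mathsf{Act})$ with operator set $\mathsf{Op}'$ containing $p$, such that: $\langle\alpha\rangle^{\ge k}\notin\mathsf{Op}'$ for all $k\ge2$ and $\alpha\in\mathsf{Act}$; $\mathsf{Op}_{[\cdot]}\subseteq\mathsf{Op}'$ or $\mathsf{Op}_{\langle\cdot\rangle}\subseteq\mathsf{Op}'$; $\wedge\in\mathsf{Op}'$ implies $\mathsf{Op}_{[\cdot]}\subseteq\mathsf{Op}'$; and $\vee\in\mathsf{Op}'$ implies $\mathsf{Op}_{\langle\cdot\rangle}\subseteq\mathsf{Op}'$. Then for every $n\in\mathbb{N}$ there is a sample $\mathcal{S}=(\mathcal{P},\mathcal{N})$ of Kripke structures in $\mathcal{K}(\mathsf{Prop},\mathsf{Act})$ such that $k:=\sum_{K\in\mathcal{P}\cup\mathcal{N}}|Q_K|\ge n$ and the minimal size of an $\mathcal{S}$-separating $\mathsf{L}'$-formula is at least $2^{k/25}$.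
   Context: $\mathsf{ML}(\mathsf{Prop},\mathsf{Act})$-formulas: $\varphi::=q\mid\neg\varphi\mid\varphi\vee\varphi\mid\varphi\wedge\varphi\mid\langle\alpha\rangle^{\ge k}\varphi\mid[\alpha]\varphi$ with $q\in\mathsf{Prop}$, $\alpha\in\mathsf{Act}$, $k\ge1$. A fragment is given by a subset $\mathsf{Op}'$ of these operators (propositions, $\neg,\vee,\wedge$, each $\langle\alpha\rangle^{\ge k}$, each $[\alpha]$), its formulas being those using only operators of $\mathsf{Op}'$; it is monotone if $\neg\notin\mathsf{Op}'$ and at most one of $\vee,\wedge$ is in $\mathsf{Op}'$. $\mathsf{sz}(\varphi)$ is the number of distinct subformulas. $\mathcal{K}(\mathsf{Prop},\mathsf{Act})$: Kripke structures $K=(Q,I,A,\delta,P,\pi)$ with $Q=Q_K$ a finite non-empty set of states, $I\subseteq Q$ non-empty, $A\subseteq\mathsf{Act}$ non-empty, $\delta:Q\times A\to 2^Q$ (take $\delta(q,\alpha)=\emptyset$ for $\alpha\notin A$), $P\subseteq\mathsf{Prop}$, $\pi:Q\to 2^P$. Semantics at states: $q\models r$ iff $r\in\pi(q)$; Boolean connectives as usual; $q\models[\alpha]\varphi$ iff $\delta(q,\alpha)\subseteq\{q':q'\models\varphi\}$; $q\models\langle\alpha\rangle^{\ge k}\varphi$ iff $|\delta(q,\alpha)\cap\{q':q'\models\varphi\}|\ge k$. $K\models\varphi$ iff $q\models\varphi$ for all $q\in I$. A formula is $\mathcal{S}$-separating if satisfied by all structures in $\mathcal{P}$ and by none in $\mathcal{N}$.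 *)

theory Defs
  imports Complex_Main
begin

datatype prp = Pp
datatype act = Aa | Ab | Ac | Ad | Ae

text \<open>ML(Prop,Act)-formulas; Dia al k f stands for the counting diamond with threshold k.\<close>
datatype form =
    Atom prp
  | Neg form
  | Or form form
  | And form form
  | Dia act nat form
  | Box act form

datatype oper = OAtom prp | ONeg | OOr | OAnd | ODia act nat | OBox act

fun ops :: "form \<Rightarrow> oper set" where
  "ops (Atom q) = {OAtom q}"
| "ops (Neg f) = insert ONeg (ops f)"
| "ops (Or f g) = insert OOr (ops f \<union> ops g)"
| "ops (And f g) = insert OAnd (ops f \<union> ops g)"
| "ops (Dia al k f) = insert (ODia al k) (ops f)"
| "ops (Box al f) = insert (OBox al) (ops f)"

definition valid_ops :: "oper set \<Rightarrow> bool" where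
  "valid_ops Ops \<longleftrightarrow> (\<forall>al k. ODia al k \<in> Ops \<longrightarrow> k \<ge> 1)"

definition in_fragment :: "oper set \<Rightarrow> form \<Rightarrow> bool" where
  "in_fragment Ops f \<longleftrightarrow> ops f \<subseteq> Ops"

definition monotone_frag :: "oper set \<Rightarrow> bool" where
  "monotone_frag Ops \<longleftrightarrow> ONeg \<notin> Ops \<and> \<not> (OOr \<in> Ops \<and> OAnd \<in> Ops)"

definition Op_box :: "oper set" where
  "Op_box = {OBox al | al. True}"

definition Op_dia :: "oper set" where
  "Op_dia = {ODia al 1 | al. True}"

fun subformulas :: "form \<Rightarrow> form set" where
  "subformulas (Atom q) = {Atom q}"
| "subformulas (Neg f) = insert (Neg f) (subformulas f)"
| "subformulas (Or f g) = insert (Or f g) (subformulas f \<union> subformulas g)"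
| "subformulas (And f g) = insert (And f g) (subformulas f \<union> subformulas g)"
| "subformulas (Dia al k f) = insert (Dia al k f) (subformulas f)"
| "subformulas (Box al f) = insert (Box al f) (subformulas f)"

definition sz :: "form \<Rightarrow> nat" where
  "sz f = card (subformulas f)"

record kripke =
  states :: "nat set"
  init :: "nat set"
  acts :: "act set"
  trans :: "nat \<Rightarrow> act \<Rightarrow> nat set"
  props :: "prp set"
  lab :: "nat \<Rightarrow> prp set"

definition wf_kripke :: "kripke \<Rightarrow> bool" where
  "wf_kripke K \<longleftrightarrow>
     finite (states K) \<and> states K \<noteq> {} \<and>
     init K \<subseteq> states K \<and> init K \<noteq> {} \<and>
     acts K \<noteq> {} \<and>
     (\<forall>q al. trans K q al \<subseteq> states K) \<and>
     (\<forall>q al. al \<notin> acts K \<longrightarrow> trans K q al = {}) \<and>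
     (\<forall>q al. q \<notin> states K \<longrightarrow> trans K q al = {}) \<and>
     (\<forall>q. lab K q \<subseteq> props K) \<and>
     (\<forall>q. q \<notin> states K \<longrightarrow> lab K q = {})"

fun sat :: "kripke \<Rightarrow> nat \<Rightarrow> form \<Rightarrow> bool" where
  "sat K q (Atom r) \<longleftrightarrow> r \<in> lab K q"
| "sat K q (Neg f) \<longleftrightarrow> \<not> sat K q f"
| "sat K q (Or f g) \<longleftrightarrow> sat K q f \<or> sat K q g"
| "sat K q (And f g) \<longleftrightarrow> sat K q f \<and> sat K q g"
| "sat K q (Box al f) \<longleftrightarrow> trans K q al \<subseteq> {q'. sat K q' f}"
| "sat K q (Dia al k f) \<longleftrightarrow> card (trans K q al \<inter> {q'. sat K q' f}) \<ge> k"

definition models :: "kripke \<Rightarrow> form \<Rightarrow> bool" where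
  "models K f \<longleftrightarrow> (\<forall>q\<in>init K. sat K q f)"

definition separating :: "kripke set \<Rightarrow> kripke set \<Rightarrow> form \<Rightarrow> bool" where
  "separating Pos Negs f \<longleftrightarrow> (\<forall>K\<in>Pos. models K f) \<and> (\<forall>K\<in>Negs. \<not> models K f)"

end

theory Submission
  imports Defs "HOL-Library.Countable"
begin

text \<open>
  For \<open>R > 0\<close> a Kripke structure with \<open>6R + 1\<close> states, built from a nondeterministic automaton,
  satisfies the box chain \<open>[w]p\<close> for the word \<open>w\<close> spelling out an \<open>R\<close>-bit binary counter
  running from \<open>0\<close> to \<open>2^R - 1\<close>, but refutes \<open>[w]p\<close> for every nonempty word shorter than
  \<open>R(2^R - 1)\<close>. A three-state structure refutes every nonempty box chain, yet it satisfies every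
  formula built from \<open>p\<close>, conjunction, boxes and unary diamonds that holds in the counter
  structure and has modal depth below \<open>R(2^R - 1)\<close>: its middle state imitates the set of states
  reached along a path, and an atom can only fail there if the counter structure refutes a short
  box chain. So every separating formula has at least \<open>2^R\<close> subformulas, while the sample has
  \<open>6R + 4\<close> states. For fragments with disjunction and diamonds, complementing the labels and
  dualising the formula exchanges the two situations.
\<close>

section \<open>Box chains and duality\<close>

definition reach :: "('s \<Rightarrow> act \<Rightarrow> 's set) \<Rightarrow> 's set \<Rightarrow> act list \<Rightarrow> 's set" where
  "reach \<delta> S w = foldl (\<lambda>S a. \<Union>s\<in>S. \<delta> s a) S w"

lemma reach_Nil [simp]: "reach \<delta> S [] = S"
  by (simp add: reach_def)

lemma reach_Cons [simp]: "reach \<delta> S (a # w) = reach \<delta> (\<Union>s\<in>S. \<delta> s a) w"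
  by (simp add: reach_def)

lemma reach_append: "reach \<delta> S (v @ w) = reach \<delta> (reach \<delta> S v) w"
  by (simp add: reach_def)

lemma reach_snoc: "reach \<delta> S (w @ [a]) = (\<Union>s\<in>reach \<delta> S w. \<delta> s a)"
  by (simp add: reach_append)

lemma reach_self_loop:
  assumes "\<And>a. s \<in> \<delta> s a" "s \<in> S"
  shows "s \<in> reach \<delta> S w"
  using assms(2)
proof (induction w arbitrary: S)
  case (Cons a w)
  have "s \<in> (\<Union>t\<in>S. \<delta> t a)" using Cons.prems assms(1) by blast
  then show ?case by (simp add: Cons.IH)
qed simp

fun boxes :: "act list \<Rightarrow> form" where
  "boxes [] = Atom Pp"
| "boxes (a # w) = Box a (boxes w)"

fun diamonds :: "act list \<Rightarrow> form" where
  "diamonds [] = Atom Pp"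
| "diamonds (a # w) = Dia a 1 (diamonds w)"

lemma ops_boxes: "ops (boxes w) \<subseteq> insert (OAtom Pp) Op_box"
  by (induction w) (auto simp: Op_box_def)

lemma ops_diamonds: "ops (diamonds w) \<subseteq> insert (OAtom Pp) Op_dia"
  by (induction w) (auto simp: Op_dia_def)

lemma Dia_in_ops_diamonds: "ODia al k \<in> ops (diamonds w) \<Longrightarrow> k = 1"
  by (induction w) auto

lemma sat_boxes_on:
  "(\<forall>q\<in>S. sat K q (boxes w)) \<longleftrightarrow> (\<forall>q\<in>reach (trans K) S w. Pp \<in> lab K q)"
proof (induction w arbitrary: S)
  case (Cons a w)
  show ?case using Cons.IH[of "\<Union>s\<in>S. trans K s a"] by auto
qed simp

lemma models_boxes:
  "models K (boxes w) \<longleftrightarrow> (\<forall>q\<in>reach (trans K) (init K) w. Pp \<in> lab K q)"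
  by (simp add: models_def sat_boxes_on)

fun modal_depth :: "form \<Rightarrow> nat" where
  "modal_depth (Atom q) = 0"
| "modal_depth (Neg f) = modal_depth f"
| "modal_depth (Or f g) = max (modal_depth f) (modal_depth g)"
| "modal_depth (And f g) = max (modal_depth f) (modal_depth g)"
| "modal_depth (Dia al k f) = Suc (modal_depth f)"
| "modal_depth (Box al f) = Suc (modal_depth f)"

lemma finite_subformulas: "finite (subformulas f)"
  by (induction f) auto

lemma size_subformula: "g \<in> subformulas f \<Longrightarrow> size g \<le> size f"
  by (induction f) auto

lemma modal_depth_less_sz: "modal_depth f < sz f"
proof (induction f)
  case (Neg f)
  have "Neg f \<notin> subformulas f" using size_subformula by fastforce
  with Neg show ?case by (simp add: sz_def finite_subformulas)
next
  case (Or f g)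
  have "sz f \<le> sz (Or f g)" "sz g \<le> sz (Or f g)"
    unfolding sz_def by (auto intro!: card_mono simp: finite_subformulas)
  with Or show ?case by simp
next
  case (And f g)
  have "sz f \<le> sz (And f g)" "sz g \<le> sz (And f g)"
    unfolding sz_def by (auto intro!: card_mono simp: finite_subformulas)
  with And show ?case by simp
next
  case (Dia al k f)
  have "Dia al k f \<notin> subformulas f" using size_subformula by fastforce
  with Dia show ?case by (simp add: sz_def finite_subformulas)
next
  case (Box al f)
  have "Box al f \<notin> subformulas f" using size_subformula by fastforce
  with Box show ?case by (simp add: sz_def finite_subformulas)
qed (simp add: sz_def)

fun conjunctive :: "form \<Rightarrow> bool" where
  "conjunctive (Atom q) \<longleftrightarrow> True"
| "conjunctive (Neg f) \<longleftrightarrow> False"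
| "conjunctive (Or f g) \<longleftrightarrow> False"
| "conjunctive (And f g) \<longleftrightarrow> conjunctive f \<and> conjunctive g"
| "conjunctive (Dia al k f) \<longleftrightarrow> k \<le> 1 \<and> conjunctive f"
| "conjunctive (Box al f) \<longleftrightarrow> conjunctive f"

lemma conjunctiveI:
  "ONeg \<notin> ops f \<Longrightarrow> OOr \<notin> ops f \<Longrightarrow> \<forall>al k. ODia al k \<in> ops f \<longrightarrow> k \<le> 1 \<Longrightarrow> conjunctive f"
  by (induction f) auto

fun dual :: "form \<Rightarrow> form" where
  "dual (Atom q) = Atom q"
| "dual (Neg f) = Neg (dual f)"
| "dual (Or f g) = And (dual f) (dual g)"
| "dual (And f g) = Or (dual f) (dual g)"
| "dual (Dia al k f) = Box al (dual f)"
| "dual (Box al f) = Dia al 1 (dual f)"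

lemma modal_depth_dual [simp]: "modal_depth (dual f) = modal_depth f"
  by (induction f) auto

lemma dual_diamonds [simp]: "dual (diamonds w) = boxes w"
  by (induction w) auto

lemma conjunctive_dual: "ONeg \<notin> ops f \<Longrightarrow> OAnd \<notin> ops f \<Longrightarrow> conjunctive (dual f)"
  by (induction f) auto

definition negate_kripke :: "kripke \<Rightarrow> kripke" where
  "negate_kripke K = K\<lparr>props := {Pp}, lab := \<lambda>q. if q \<in> states K \<and> Pp \<notin> lab K q then {Pp} else {}\<rparr>"

lemma wf_negate_kripke: "wf_kripke K \<Longrightarrow> wf_kripke (negate_kripke K)"
  by (simp add: wf_kripke_def negate_kripke_def)

lemma trans_subset_states: "wf_kripke K \<Longrightarrow> trans K q al \<subseteq> states K"
  by (simp add: wf_kripke_def)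

lemma finite_trans: "wf_kripke K \<Longrightarrow> finite (trans K q al)"
  by (meson finite_subset trans_subset_states wf_kripke_def)

lemma prp_eq_Pp: "r = Pp"
  by (cases r) simp

lemma states_negate_kripke [simp]: "states (negate_kripke K) = states K"
  and trans_negate_kripke [simp]: "trans (negate_kripke K) = trans K"
  and init_negate_kripke [simp]: "init (negate_kripke K) = init K"
  by (simp_all add: negate_kripke_def)

lemma sat_Dia_1_iff: "finite (trans K q al) \<Longrightarrow> sat K q (Dia al 1 f) \<longleftrightarrow> (\<exists>t\<in>trans K q al. sat K t f)"
  by (auto simp: Suc_le_eq card_gt_0_iff)

lemma sat_negate_kripke:
  assumes "wf_kripke K" "q \<in> states K" "\<forall>al k. ODia al k \<in> ops f \<longrightarrow> k = 1"
  shows "sat (negate_kripke K) q f \<longleftrightarrow> \<not> sat K q (dual f)"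
  using assms(2,3)
proof (induction f arbitrary: q)
  case (Atom r)
  then show ?case by (simp add: negate_kripke_def prp_eq_Pp[of r])
next
  case (Dia al k f)
  from Dia.prems(2) have "k = 1" "\<forall>al k. ODia al k \<in> ops f \<longrightarrow> k = 1" by auto
  with Dia.IH have "\<forall>t\<in>trans K q al. sat (negate_kripke K) t f \<longleftrightarrow> \<not> sat K t (dual f)"
    using trans_subset_states[OF assms(1)] by blast
  with \<open>k = 1\<close> show ?case
    using sat_Dia_1_iff[of "negate_kripke K"] finite_trans[OF assms(1)] by auto
next
  case (Box al f)
  from Box.prems(2) have "\<forall>al k. ODia al k \<in> ops f \<longrightarrow> k = 1" by simp
  with Box.IH have "\<forall>t\<in>trans K q al. sat (negate_kripke K) t f \<longleftrightarrow> \<not> sat K t (dual f)"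
    using trans_subset_states[OF assms(1)] by blast
  then show ?case
    using sat_Dia_1_iff[of K] finite_trans[OF assms(1)] by auto
qed auto

lemma models_negate_kripke:
  assumes "wf_kripke K" "init K = {q}" "\<forall>al k. ODia al k \<in> ops f \<longrightarrow> k = 1"
  shows "models (negate_kripke K) f \<longleftrightarrow> \<not> models K (dual f)"
proof -
  have "q \<in> states K" using assms(1,2) by (auto simp: wf_kripke_def)
  then show ?thesis
    using sat_negate_kripke[OF assms(1) _ assms(3)] assms(2) by (simp add: models_def)
qed

section \<open>The trap structure\<close>

definition trap_kripke :: kripke where
  "trap_kripke = \<lparr>states = {0, 1, 2}, init = {0}, acts = UNIV,
     trans = (\<lambda>q a. if q \<in> {0, 1} then {1, 2} else if q = 2 then {2} else {}),
     props = {Pp}, lab = (\<lambda>q. if q \<in> {0, 2} then {Pp} else {})\<rparr>"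

lemma wf_trap_kripke: "wf_kripke trap_kripke"
  by (simp add: wf_kripke_def trap_kripke_def)

lemma card_states_trap_kripke: "card (states trap_kripke) = 3"
  by (simp add: trap_kripke_def)

lemma init_trap_kripke: "init trap_kripke = {0}"
  by (simp add: trap_kripke_def)

lemma trans_trap_kripke: "q \<in> {0, 1} \<Longrightarrow> trans trap_kripke q al = {1, 2}"
  by (simp add: trap_kripke_def)

lemma sat_trap_kripke_2: "conjunctive f \<Longrightarrow> sat trap_kripke 2 f"
  by (induction f) (auto simp: trap_kripke_def prp_eq_Pp)

lemma not_models_boxes_trap_kripke:
  assumes "w \<noteq> []"
  shows "\<not> models trap_kripke (boxes w)"
proof -
  obtain a v where w: "w = a # v" using assms by (cases w) auto
  have "1 \<in> reach (trans trap_kripke) {1, 2} v"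
    by (rule reach_self_loop) (auto simp: trap_kripke_def)
  moreover have "reach (trans trap_kripke) (init trap_kripke) w = reach (trans trap_kripke) {1, 2} v"
    by (simp add: w trap_kripke_def)
  ultimately show ?thesis
    unfolding models_boxes by (force simp: trap_kripke_def)
qed

lemma models_trap_kripke:
  assumes "conjunctive f" "models K f" "modal_depth f < L"
    and short_boxes: "\<forall>w. w \<noteq> [] \<longrightarrow> length w < L \<longrightarrow> \<not> models K (boxes w)"
  shows "models trap_kripke f"
proof -
  \<comment> \<open>State 0 stands for the initial states of \<open>K\<close>, state 1 for those reached by a nonempty \<open>w\<close>.\<close>
  have "sat trap_kripke (if w = [] then 0 else 1) g"
    if "conjunctive g" "length w + modal_depth g < L"
      and "\<forall>q\<in>reach (trans K) (init K) w. sat K q g" for g w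
    using that
  proof (induction g arbitrary: w)
    case (Atom r)
    then have "w = [] \<or> models K (boxes w)"
      by (auto simp: models_boxes prp_eq_Pp[of r])
    with short_boxes Atom.prems(2) show ?case
      by (auto simp: trap_kripke_def prp_eq_Pp)
  next
    case (Dia al k g)
    have "0 < card ({1, 2} \<inter> {q. sat trap_kripke q g})"
      using sat_trap_kripke_2[of g] Dia.prems(1) by (auto simp: card_gt_0_iff)
    with Dia.prems(1) show ?case
      by (simp add: trans_trap_kripke)
  next
    case (Box al g)
    have "sat trap_kripke 1 g"
      using Box.IH[of "w @ [al]"] Box.prems by (auto simp: reach_snoc)
    then show ?case
      using sat_trap_kripke_2[of g] Box.prems(1) by (simp add: trans_trap_kripke)
  qed auto
  from this[of f "[]"] assms(1-3) show ?thesis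
    by (simp add: models_def init_trap_kripke)
qed

section \<open>Binary counter words\<close>

text \<open>
  Apart from the unused letter \<open>Ae\<close>, a letter records one bit of a counter before and after an
  increment: \<open>Aa\<close> is \<open>0 \<mapsto> 0\<close>, \<open>Ab\<close> is \<open>1 \<mapsto> 1\<close>, \<open>Ac\<close> is \<open>1 \<mapsto> 0\<close> and \<open>Ad\<close> is \<open>0 \<mapsto> 1\<close>.
  A counter word consists of blocks of \<open>R\<close> letters, block \<open>k\<close> carrying the bits of \<open>k\<close> (least
  significant first) as old bits and those of \<open>k + 1\<close> as new bits; each block starts with an
  incoming carry, a bit flips exactly when a carry comes in, and only \<open>1 \<mapsto> 0\<close> passes it on.
\<close>

fun old_bit :: "act \<Rightarrow> bool" where
  "old_bit Aa = False" | "old_bit Ab = True" | "old_bit Ac = True" | "old_bit Ad = False" | "old_bit Ae = False"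

fun new_bit :: "act \<Rightarrow> bool" where
  "new_bit Aa = False" | "new_bit Ab = True" | "new_bit Ac = False" | "new_bit Ad = True" | "new_bit Ae = False"

definition letter :: "bool \<Rightarrow> bool \<Rightarrow> act" where
  "letter b b' = (if b then if b' then Ab else Ac else if b' then Ad else Aa)"

lemma old_bit_letter [simp]: "old_bit (letter b b') = b"
  and new_bit_letter [simp]: "new_bit (letter b b') = b'"
  and letter_neq_Ae [simp]: "letter b b' \<noteq> Ae"
  by (simp_all add: letter_def)

lemma letter_old_bit_new_bit: "l \<noteq> Ae \<Longrightarrow> letter (old_bit l) (new_bit l) = l"
  by (cases l) (simp_all add: letter_def)

definition valid_letter :: "bool \<Rightarrow> act \<Rightarrow> bool" where
  "valid_letter c l \<longleftrightarrow> l \<noteq> Ae \<and> (new_bit l \<noteq> old_bit l \<longleftrightarrow> c)"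

definition carry :: "nat \<Rightarrow> act list \<Rightarrow> nat \<Rightarrow> bool" where
  "carry R w i \<longleftrightarrow> i mod R = 0 \<or> old_bit (w ! (i - 1)) \<and> \<not> new_bit (w ! (i - 1))"

definition position_ok :: "nat \<Rightarrow> act list \<Rightarrow> nat \<Rightarrow> bool" where
  "position_ok R w i \<longleftrightarrow>
     valid_letter (carry R w i) (w ! i) \<and> old_bit (w ! i) = (R \<le> i \<and> new_bit (w ! (i - R)))"

definition counter_word :: "nat \<Rightarrow> act list \<Rightarrow> bool" where
  "counter_word R w \<longleftrightarrow>
     (\<forall>i<length w. position_ok R w i) \<and> length w mod R = 0 \<and>
     (\<forall>i<length w. length w \<le> i + R \<longrightarrow> new_bit (w ! i))"

definition counter_letter :: "nat \<Rightarrow> nat \<Rightarrow> act" where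
  "counter_letter R i = letter (bit (i div R) (i mod R)) (bit (Suc (i div R)) (i mod R))"

definition counter_sequence :: "nat \<Rightarrow> act list" where
  "counter_sequence R = map (counter_letter R) [0..<R * (2 ^ R - 1)]"

lemma bit_Suc_neq_iff: "bit (Suc k) j \<noteq> bit k j \<longleftrightarrow> (\<forall>i<j. bit k i)" for k :: nat
proof (induction j arbitrary: k)
  case 0
  then show ?case by (simp add: bit_0)
next
  case (Suc j)
  show ?case
  proof (cases "even k")
    case True
    then have "Suc k div 2 = k div 2" by (simp add: even_iff_mod_2_eq_zero)
    with True show ?thesis by (auto simp: bit_Suc bit_0)
  next
    case False
    then have "Suc k div 2 = Suc (k div 2)" by (simp add: odd_iff_mod_2_eq_one)
    with False Suc.IH[of "k div 2"] show ?thesis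
      by (simp add: bit_Suc bit_0 All_less_Suc2)
  qed
qed

lemma mask_le_if_low_bits: "(\<forall>j<n. bit m j) \<Longrightarrow> 2 ^ n - 1 \<le> m" for m :: nat
proof -
  assume "\<forall>j<n. bit m j"
  then have "take_bit n m = mask n"
    by (intro bit_eqI) (auto simp: bit_take_bit_iff bit_mask_iff)
  then show ?thesis
    using take_bit_nat_less_eq_self[of n m] by (simp add: mask_eq_exp_minus_1)
qed

lemma new_bit_counter_letter: "new_bit (counter_letter R i) = bit (Suc (i div R)) (i mod R)"
  by (simp add: counter_letter_def)

lemma new_bit_counter_letter_prev_block:
  assumes "0 < R"
  shows "(R \<le> i \<and> new_bit (counter_letter R (i - R))) = old_bit (counter_letter R i)"
proof (cases "R \<le> i")
  case True
  then have "Suc ((i - R) div R) = i div R" "(i - R) mod R = i mod R"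
    using assms by (simp_all add: le_div_geq le_mod_geq)
  with True show ?thesis by (simp add: counter_letter_def)
qed (simp add: counter_letter_def)

lemma carry_counter_letters:
  assumes "0 < R" and prev: "0 < i mod R \<Longrightarrow> w ! (i - 1) = counter_letter R (i - 1)"
  shows "carry R w i \<longleftrightarrow> (\<forall>j<i mod R. bit (i div R) j)"
proof (cases "i mod R = 0")
  case False
  define j where "j = i mod R - 1"
  have j: "i mod R = Suc j" using False by (simp add: j_def)
  have "i - 1 = i div R * R + j"
    using div_mult_mod_eq[of i R] j by simp
  then have "(i - 1) div R = i div R" "(i - 1) mod R = j"
    using j mod_less_divisor[OF assms(1), of i] by simp_all
  then have "carry R w i \<longleftrightarrow> bit (i div R) j \<and> bit (Suc (i div R)) j \<noteq> bit (i div R) j"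
    using prev False by (auto simp: carry_def counter_letter_def)
  also have "\<dots> \<longleftrightarrow> (\<forall>j'<i mod R. bit (i div R) j')"
    using bit_Suc_neq_iff[of "i div R" j] by (auto simp: j less_Suc_eq)
  finally show ?thesis .
qed (simp add: carry_def)

lemma position_ok_counter_letters:
  assumes "0 < R" and w: "\<forall>i'\<le>i. w ! i' = counter_letter R i'"
  shows "position_ok R w i"
proof -
  have "carry R w i \<longleftrightarrow> (\<forall>j<i mod R. bit (i div R) j)"
    using w by (intro carry_counter_letters[OF assms(1)]) simp
  then have "valid_letter (carry R w i) (w ! i)"
    using w bit_Suc_neq_iff by (simp add: valid_letter_def counter_letter_def)
  then show ?thesis
    using w new_bit_counter_letter_prev_block[OF assms(1), of i] by (simp add: position_ok_def)
qed

lemma nth_eq_counter_letter: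
  assumes "0 < R" "\<forall>i<length w. position_ok R w i" "i < length w"
  shows "w ! i = counter_letter R i"
  using assms(3)
proof (induction i rule: less_induct)
  case (less i)
  have ok: "position_ok R w i" using assms(2) less.prems by blast
  have "w ! (i - 1) = counter_letter R (i - 1)" if "0 < i mod R"
  proof (rule less.IH)
    show "i - 1 < i" using that by (cases i) auto
  qed (use less.prems in simp)
  then have carry: "carry R w i \<longleftrightarrow> (\<forall>j<i mod R. bit (i div R) j)"
    by (rule carry_counter_letters[OF assms(1)])
  have "old_bit (w ! i) = (R \<le> i \<and> new_bit (w ! (i - R)))"
    using ok by (simp add: position_ok_def)
  also have "\<dots> = (R \<le> i \<and> new_bit (counter_letter R (i - R)))"
    using assms(1) less by (cases "R \<le> i") (simp_all add: less.IH)
  also have "\<dots> = old_bit (counter_letter R i)"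
    by (rule new_bit_counter_letter_prev_block[OF assms(1)])
  finally have old: "old_bit (w ! i) = old_bit (counter_letter R i)" .
  have new: "new_bit (w ! i) = new_bit (counter_letter R i)"
    using ok carry old bit_Suc_neq_iff
    by (auto simp: position_ok_def valid_letter_def counter_letter_def)
  have "w ! i \<noteq> Ae"
    using ok by (simp add: position_ok_def valid_letter_def)
  then have "w ! i = letter (old_bit (w ! i)) (new_bit (w ! i))"
    by (simp add: letter_old_bit_new_bit)
  then show ?case
    by (simp add: old new counter_letter_def)
qed

lemma counter_word_length:
  assumes "0 < R" "counter_word R w" "w \<noteq> []"
  shows "R * (2 ^ R - 1) \<le> length w"
proof -
  define m where "m = length w div R"
  have len: "length w = m * R"
    using assms(2) div_mult_mod_eq[of "length w" R] by (simp add: m_def counter_word_def)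
  then have "0 < m" using assms(3) by (cases m) auto
  have "bit m j" if "j < R" for j
  proof -
    define i where "i = (m - 1) * R + j"
    have i: "i < length w" "length w \<le> i + R"
      using len that \<open>0 < m\<close> by (auto simp: i_def algebra_simps dest: less_imp_Suc_add)
    have "i div R = m - 1" "i mod R = j" using that by (simp_all add: i_def)
    then have "new_bit (w ! i) = bit m j"
      using nth_eq_counter_letter[OF assms(1) _ i(1)] assms(2) \<open>0 < m\<close>
      by (simp add: counter_word_def new_bit_counter_letter)
    with assms(2) i show ?thesis by (simp add: counter_word_def)
  qed
  then have "2 ^ R - 1 \<le> m" using mask_le_if_low_bits by blast
  then show ?thesis by (simp add: len)
qed

lemma counter_word_counter_sequence:
  assumes "0 < R"
  shows "counter_word R (counter_sequence R)"
proof -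
  let ?w = "counter_sequence R"
  have nth: "\<forall>i<length ?w. ?w ! i = counter_letter R i"
    by (simp add: counter_sequence_def)
  have "new_bit (?w ! i)" if "i < length ?w" "length ?w \<le> i + R" for i
  proof -
    have "i div R < 2 ^ R - 1"
      using that(1) by (simp add: counter_sequence_def less_mult_imp_div_less mult.commute)
    moreover have "(R * (2 ^ R - 1)) div R \<le> (i + R) div R"
      using that(2) by (intro div_le_mono) (simp add: counter_sequence_def)
    ultimately have "Suc (i div R) = 2 ^ R - 1" using assms by simp
    moreover have "bit (mask R :: nat) (i mod R)"
      using assms by (simp add: bit_mask_iff)
    ultimately show ?thesis
      using nth that(1) by (simp add: new_bit_counter_letter mask_eq_exp_minus_1)
  qed
  moreover have "position_ok R ?w i" if "i < length ?w" for i
    using nth that by (intro position_ok_counter_letters[OF assms]) simp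
  ultimately show ?thesis
    by (simp add: counter_word_def counter_sequence_def)
qed

section \<open>The counter structure\<close>

text \<open>
  \<open>Main j c first\<close> reads position \<open>j\<close> of a block with incoming carry \<open>c\<close>, \<open>first\<close> telling whether
  this is block 0. On each letter it spawns \<open>Check b R\<close>, which compares the new bit \<open>b\<close> with the
  old bit of the letter read \<open>R\<close> steps later. A check still pending at the end of the word is
  labelled by \<open>b\<close>, which forces the last block to consist of ones.
\<close>

datatype counter_state = Fail | Main nat bool bool | Check bool nat

instance counter_state :: countable
  by countable_datatype

fun counter_step :: "nat \<Rightarrow> counter_state \<Rightarrow> act \<Rightarrow> counter_state set" where
  "counter_step R Fail l = {Fail}"
| "counter_step R (Main j c first) l =
     (if valid_letter c l \<and> \<not> (first \<and> old_bit l)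
      then {Main (Suc j mod R) (Suc j mod R = 0 \<or> old_bit l \<and> \<not> new_bit l) (first \<and> Suc j mod R \<noteq> 0),
            Check (new_bit l) R}
      else {Fail})"
| "counter_step R (Check v d) l =
     (if 2 \<le> d then {Check v (d - 1)} else if old_bit l = v then {} else {Fail})"

fun counter_label :: "counter_state \<Rightarrow> bool" where
  "counter_label Fail \<longleftrightarrow> False"
| "counter_label (Main j c first) \<longleftrightarrow> j = 0"
| "counter_label (Check v d) \<longleftrightarrow> v"

definition counter_reach :: "nat \<Rightarrow> act list \<Rightarrow> counter_state set" where
  "counter_reach R w = reach (counter_step R) {Main 0 True True} w"

lemma counter_step_Main:
  assumes "0 < R" "position_ok R w m"
  shows "counter_step R (Main (m mod R) (carry R w m) (m < R)) (w ! m) =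
    {Main (Suc m mod R) (carry R w (Suc m)) (Suc m < R), Check (new_bit (w ! m)) R}"
proof -
  have "Suc (m mod R) mod R = Suc m mod R" by (simp add: mod_Suc_eq)
  moreover have "(m < R \<and> Suc m mod R \<noteq> 0) = (Suc m < R)"
    by (cases "Suc m = R") auto
  ultimately show ?thesis
    using assms(2) by (auto simp: position_ok_def carry_def)
qed

lemma counter_step_Check:
  assumes "position_ok R w m" "i < m" "m \<le> i + R"
  shows "counter_step R (Check (new_bit (w ! i)) (Suc i + R - m)) (w ! m) =
    (if m < i + R then {Check (new_bit (w ! i)) (Suc i + R - Suc m)} else {})"
proof (cases "m < i + R")
  case True
  then have "2 \<le> Suc i + R - m" "Suc i + R - m - 1 = Suc i + R - Suc m" by auto
  with True show ?thesis by simp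
next
  case False
  with assms have "m = i + R" "Suc i + R - m = 1" by auto
  with assms(1) show ?thesis by (simp add: position_ok_def)
qed

lemma counter_reach_take:
  assumes "0 < R" "m \<le> length w" "\<forall>i<m. position_ok R w i"
  shows "counter_reach R (take m w) =
    insert (Main (m mod R) (carry R w m) (m < R))
      ((\<lambda>i. Check (new_bit (w ! i)) (Suc i + R - m)) ` {i. i < m \<and> m \<le> i + R})"
  using assms(2,3)
proof (induction m)
  case 0
  show ?case using assms(1) by (simp add: counter_reach_def carry_def)
next
  case (Suc m)
  let ?check = "\<lambda>m i. Check (new_bit (w ! i)) (Suc i + R - m)"
  have ok: "position_ok R w m" and m: "m < length w" using Suc.prems by auto
  have IH: "counter_reach R (take m w) =
      insert (Main (m mod R) (carry R w m) (m < R)) (?check m ` {i. i < m \<and> m \<le> i + R})"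
    using Suc by simp
  have checks: "(\<Union>i\<in>{i. i < m \<and> m \<le> i + R}. counter_step R (?check m i) (w ! m)) =
      ?check (Suc m) ` {i. i < m \<and> Suc m \<le> i + R}"
    using counter_step_Check[OF ok] by (auto split: if_splits)
  have "counter_reach R (take (Suc m) w) =
      (\<Union>s\<in>counter_reach R (take m w). counter_step R s (w ! m))"
    using m by (simp add: counter_reach_def take_Suc_conv_app_nth reach_snoc)
  also have "\<dots> = insert (Main (Suc m mod R) (carry R w (Suc m)) (Suc m < R))
      (insert (?check (Suc m) m) (?check (Suc m) ` {i. i < m \<and> Suc m \<le> i + R}))"
    using checks by (simp del: counter_step.simps add: IH counter_step_Main[OF assms(1) ok])
  also have "insert (?check (Suc m) m) (?check (Suc m) ` {i. i < m \<and> Suc m \<le> i + R}) =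
      ?check (Suc m) ` {i. i < Suc m \<and> Suc m \<le> i + R}"
    using assms(1) by (auto simp: less_Suc_eq)
  finally show ?case .
qed

lemma Fail_in_counter_reach:
  assumes "0 < R" "m < length w" "\<forall>i<m. position_ok R w i" "\<not> position_ok R w m"
  shows "Fail \<in> counter_reach R w"
proof -
  have reach_m: "counter_reach R (take m w) =
      insert (Main (m mod R) (carry R w m) (m < R))
        ((\<lambda>i. Check (new_bit (w ! i)) (Suc i + R - m)) ` {i. i < m \<and> m \<le> i + R})"
    using counter_reach_take[OF assms(1) _ assms(3)] assms(2) by simp
  have "\<exists>s\<in>counter_reach R (take m w). Fail \<in> counter_step R s (w ! m)"
  proof (cases "valid_letter (carry R w m) (w ! m) \<and> \<not> (m < R \<and> old_bit (w ! m))")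
    case True
    with assms(4) have "R \<le> m" "old_bit (w ! m) \<noteq> new_bit (w ! (m - R))"
      by (auto simp: position_ok_def)
    moreover have "Check (new_bit (w ! (m - R))) 1 \<in> counter_reach R (take m w)"
      unfolding reach_m using assms(1) \<open>R \<le> m\<close>
      by (intro insertI2 image_eqI[where x = "m - R"]) auto
    ultimately show ?thesis by force
  next
    case False
    then show ?thesis unfolding reach_m by auto
  qed
  then have "Fail \<in> counter_reach R (take (Suc m) w)"
    using assms(2) by (auto simp: counter_reach_def take_Suc_conv_app_nth reach_snoc)
  then have "Fail \<in> reach (counter_step R) (counter_reach R (take (Suc m) w)) (drop (Suc m) w)"
    by (intro reach_self_loop) simp_all
  then show ?thesis
    by (simp add: counter_reach_def flip: reach_append)
qed

lemma counter_reach_labels_iff: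
  assumes "0 < R"
  shows "(\<forall>s\<in>counter_reach R w. counter_label s) \<longleftrightarrow> counter_word R w"
proof -
  have reach_w: "counter_reach R w = insert (Main (length w mod R) (carry R w (length w)) (length w < R))
      ((\<lambda>i. Check (new_bit (w ! i)) (Suc i + R - length w)) ` {i. i < length w \<and> length w \<le> i + R})"
    if "\<forall>i<length w. position_ok R w i"
    using counter_reach_take[OF assms order_refl that] by simp
  have "\<forall>i<length w. position_ok R w i" if labelled: "\<forall>s\<in>counter_reach R w. counter_label s"
  proof (rule ccontr)
    assume "\<not> ?thesis"
    then obtain m where "m < length w" "\<forall>i<m. position_ok R w i" "\<not> position_ok R w m"
      using exists_least_iff[of "\<lambda>i. i < length w \<and> \<not> position_ok R w i"] by auto
    then have "Fail \<in> counter_reach R w"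
      by (rule Fail_in_counter_reach[OF assms])
    with labelled show False by fastforce
  qed
  with reach_w show ?thesis
    by (auto simp: counter_word_def)
qed

definition kripke_of :: "'s::countable set \<Rightarrow> 's set \<Rightarrow> ('s \<Rightarrow> act \<Rightarrow> 's set) \<Rightarrow> ('s \<Rightarrow> bool) \<Rightarrow> kripke" where
  "kripke_of V I step label = \<lparr>states = to_nat ` V, init = to_nat ` I, acts = UNIV,
     trans = (\<lambda>q a. if q \<in> to_nat ` V then to_nat ` step (from_nat q) a else {}),
     props = {Pp}, lab = (\<lambda>q. if q \<in> to_nat ` V \<and> label (from_nat q) then {Pp} else {})\<rparr>"

lemma wf_kripke_of:
  assumes "finite V" "I \<subseteq> V" "I \<noteq> {}" "\<forall>s\<in>V. \<forall>a. step s a \<subseteq> V"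
  shows "wf_kripke (kripke_of V I step label)"
  using assms unfolding wf_kripke_def kripke_of_def by (auto, blast+)

lemma card_states_kripke_of: "card (states (kripke_of V I step label)) = card V"
  by (simp add: kripke_of_def card_image inj_on_def)

lemma trans_kripke_of: "s \<in> V \<Longrightarrow> trans (kripke_of V I step label) (to_nat s) a = to_nat ` step s a"
  by (simp add: kripke_of_def)

lemma lab_kripke_of: "s \<in> V \<Longrightarrow> Pp \<in> lab (kripke_of V I step label) (to_nat s) \<longleftrightarrow> label s"
  by (simp add: kripke_of_def)

lemma reach_subset:
  "\<forall>s\<in>V. \<forall>a. step s a \<subseteq> V \<Longrightarrow> S \<subseteq> V \<Longrightarrow> reach step S w \<subseteq> V"
proof (induction w arbitrary: S)
  case (Cons a w)
  then have "(\<Union>s\<in>S. step s a) \<subseteq> V" by blast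
  with Cons.IH Cons.prems(1) show ?case by simp
qed simp

lemma reach_kripke_of:
  assumes "\<forall>s\<in>V. \<forall>a. step s a \<subseteq> V" "S \<subseteq> V"
  shows "reach (trans (kripke_of V I step label)) (to_nat ` S) w = to_nat ` reach step S w"
  using assms(2)
proof (induction w arbitrary: S)
  case (Cons a w)
  have "(\<Union>q\<in>to_nat ` S. trans (kripke_of V I step label) q a) =
      (\<Union>s\<in>S. trans (kripke_of V I step label) (to_nat s) a)"
    by (simp add: image_comp)
  also have "\<dots> = to_nat ` (\<Union>s\<in>S. step s a)"
    using Cons.prems by (simp add: trans_kripke_of subset_iff image_UN)
  finally have "(\<Union>q\<in>to_nat ` S. trans (kripke_of V I step label) q a) = to_nat ` (\<Union>s\<in>S. step s a)" .
  moreover have "(\<Union>s\<in>S. step s a) \<subseteq> V"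
    using assms(1) Cons.prems by blast
  ultimately show ?case by (simp add: Cons.IH)
qed simp

lemma models_boxes_kripke_of:
  assumes "\<forall>s\<in>V. \<forall>a. step s a \<subseteq> V" "I \<subseteq> V"
  shows "models (kripke_of V I step label) (boxes w) \<longleftrightarrow> (\<forall>s\<in>reach step I w. label s)"
proof -
  have "init (kripke_of V I step label) = to_nat ` I"
    by (simp add: kripke_of_def)
  then have "models (kripke_of V I step label) (boxes w) \<longleftrightarrow>
      (\<forall>s\<in>reach step I w. Pp \<in> lab (kripke_of V I step label) (to_nat s))"
    by (simp add: models_boxes reach_kripke_of[OF assms])
  also have "\<dots> \<longleftrightarrow> (\<forall>s\<in>reach step I w. label s)"
    using reach_subset[OF assms] lab_kripke_of by blast
  finally show ?thesis .
qed

definition counter_states :: "nat \<Rightarrow> counter_state set" where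
  "counter_states R = insert Fail
     ((\<lambda>(j, c, first). Main j c first) ` ({..<R} \<times> UNIV \<times> UNIV) \<union> (\<lambda>(v, d). Check v d) ` (UNIV \<times> {1..R}))"

lemma Fail_in_counter_states: "Fail \<in> counter_states R"
  and Main_in_counter_states_iff: "Main j c first \<in> counter_states R \<longleftrightarrow> j < R"
  and Check_in_counter_states_iff: "Check v d \<in> counter_states R \<longleftrightarrow> 1 \<le> d \<and> d \<le> R"
  unfolding counter_states_def
  by (auto intro: image_eqI[where x = "(j, c, first)"] image_eqI[where x = "(v, d)"])

lemma finite_counter_states: "finite (counter_states R)"
  by (simp add: counter_states_def)

lemma card_counter_states: "card (counter_states R) = 6 * R + 1"
proof -
  let ?M = "(\<lambda>(j, c, first). Main j c first) ` ({..<R} \<times> (UNIV :: bool set) \<times> (UNIV :: bool set))"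
  let ?C = "(\<lambda>(v, d). Check v d) ` ((UNIV :: bool set) \<times> {1..R})"
  have "card ?M = card ({..<R} \<times> (UNIV :: bool set) \<times> (UNIV :: bool set))"
    by (rule card_image) (auto simp: inj_on_def)
  also have "\<dots> = 4 * R"
    by (simp only: card_cartesian_product card_UNIV_bool card_lessThan)
  finally have M: "card ?M = 4 * R" .
  have "card ?C = card ((UNIV :: bool set) \<times> {1..R})"
    by (rule card_image) (auto simp: inj_on_def)
  also have "\<dots> = 2 * R"
    by (simp only: card_cartesian_product card_UNIV_bool card_atLeastAtMost)
  finally have C: "card ?C = 2 * R" .
  have "card (?M \<union> ?C) = 6 * R"
    using M C by (subst card_Un_disjoint) auto
  moreover have "Fail \<notin> ?M \<union> ?C" by auto
  ultimately show ?thesis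
    unfolding counter_states_def by (simp add: card_insert_disjoint)
qed

lemma counter_step_closed:
  assumes "0 < R"
  shows "\<forall>s\<in>counter_states R. \<forall>a. counter_step R s a \<subseteq> counter_states R"
proof (intro ballI allI)
  fix s a assume "s \<in> counter_states R"
  with assms show "counter_step R s a \<subseteq> counter_states R"
    by (cases s)
      (auto simp: Fail_in_counter_states Main_in_counter_states_iff Check_in_counter_states_iff)
qed

definition counter_kripke :: "nat \<Rightarrow> kripke" where
  "counter_kripke R = kripke_of (counter_states R) {Main 0 True True} (counter_step R) counter_label"

lemma wf_counter_kripke: "0 < R \<Longrightarrow> wf_kripke (counter_kripke R)"
  unfolding counter_kripke_def
  by (rule wf_kripke_of) (simp_all add: finite_counter_states counter_step_closed Main_in_counter_states_iff)

lemma card_states_counter_kripke: "card (states (counter_kripke R)) = 6 * R + 1"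
  by (simp add: counter_kripke_def card_states_kripke_of card_counter_states)

lemma init_counter_kripke: "init (counter_kripke R) = {to_nat (Main 0 True True)}"
  by (simp add: counter_kripke_def kripke_of_def)

lemma models_boxes_counter_kripke:
  "0 < R \<Longrightarrow> models (counter_kripke R) (boxes w) \<longleftrightarrow> counter_word R w"
  unfolding counter_kripke_def
  by (simp add: models_boxes_kripke_of counter_step_closed Main_in_counter_states_iff
      counter_reach_labels_iff flip: counter_reach_def)

section \<open>Hard samples\<close>

lemma modal_depth_distinguishing_counter_trap:
  assumes "0 < R" "conjunctive f" "models (counter_kripke R) f" "\<not> models trap_kripke f"
  shows "R * (2 ^ R - 1) \<le> modal_depth f"
proof (rule ccontr)
  assume "\<not> ?thesis"
  moreover have "\<forall>w. w \<noteq> [] \<longrightarrow> length w < R * (2 ^ R - 1) \<longrightarrow> \<not> models (counter_kripke R) (boxes w)"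
    using counter_word_length[OF assms(1)] models_boxes_counter_kripke[OF assms(1)] by fastforce
  ultimately have "models trap_kripke f"
    by (intro models_trap_kripke[OF assms(2,3)]) simp_all
  with assms(4) show False ..
qed

lemma counter_sequence_ne_Nil: "0 < R \<Longrightarrow> counter_sequence R \<noteq> []"
  using one_less_power[of "2::nat" R] by (simp add: counter_sequence_def)

lemma separating_boxes_counter_sequence:
  "0 < R \<Longrightarrow> separating {counter_kripke R} {trap_kripke} (boxes (counter_sequence R))"
  by (simp add: separating_def models_boxes_counter_kripke counter_word_counter_sequence
      not_models_boxes_trap_kripke counter_sequence_ne_Nil)

lemma separating_diamonds_counter_sequence:
  assumes "0 < R"
  shows "separating {negate_kripke trap_kripke} {negate_kripke (counter_kripke R)}
    (diamonds (counter_sequence R))"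
proof -
  have "\<forall>al k. ODia al k \<in> ops (diamonds (counter_sequence R)) \<longrightarrow> k = 1"
    using Dia_in_ops_diamonds by blast
  with assms show ?thesis
    by (simp add: separating_def models_negate_kripke wf_trap_kripke init_trap_kripke
        wf_counter_kripke init_counter_kripke models_boxes_counter_kripke
        counter_word_counter_sequence not_models_boxes_trap_kripke counter_sequence_ne_Nil)
qed

lemma modal_depth_distinguishing_negated:
  assumes "0 < R" "ONeg \<notin> ops f" "OAnd \<notin> ops f" "\<forall>al k. ODia al k \<in> ops f \<longrightarrow> k = 1"
    and "separating {negate_kripke trap_kripke} {negate_kripke (counter_kripke R)} f"
  shows "R * (2 ^ R - 1) \<le> modal_depth f"
proof -
  have "models (counter_kripke R) (dual f)" "\<not> models trap_kripke (dual f)"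
    using assms(1,4,5)
    by (simp_all add: separating_def models_negate_kripke wf_trap_kripke init_trap_kripke
        wf_counter_kripke init_counter_kripke)
  with modal_depth_distinguishing_counter_trap[OF assms(1) conjunctive_dual[OF assms(2,3)]]
  show ?thesis by simp
qed

lemma two_powr_le_sz:
  assumes "0 < R" "R * (2 ^ R - 1) \<le> modal_depth f"
  shows "2 powr (real (6 * R + 4) / 25) \<le> real (sz f)"
proof -
  have "2 powr (real (6 * R + 4) / 25) \<le> 2 powr real R"
    using assms(1) by (intro powr_mono) auto
  also have "\<dots> = real (2 ^ R)"
    by (simp add: powr_realpow)
  also have "\<dots> \<le> real (sz f)"
  proof -
    have "2 ^ R - 1 \<le> R * (2 ^ R - 1)" using assms(1) by simp
    then have "2 ^ R \<le> sz f"
      using assms(2) modal_depth_less_sz[of f] by linarith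
    then show ?thesis by linarith
  qed
  finally show ?thesis .
qed

definition hard_sample :: "oper set \<Rightarrow> nat \<Rightarrow> kripke set \<Rightarrow> kripke set \<Rightarrow> bool" where
  "hard_sample Ops n Pos Negs \<longleftrightarrow>
     finite Pos \<and> finite Negs \<and>
     (\<forall>K\<in>Pos \<union> Negs. wf_kripke K) \<and>
     (\<Sum>K\<in>Pos \<union> Negs. card (states K)) \<ge> n \<and>
     (\<exists>f. in_fragment Ops f \<and> separating Pos Negs f) \<and>
     (\<forall>f. in_fragment Ops f \<and> separating Pos Negs f \<longrightarrow>
         2 powr (real (\<Sum>K\<in>Pos \<union> Negs. card (states K)) / 25) \<le> real (sz f))"

lemma hard_sampleI:
  assumes "wf_kripke P" "wf_kripke N"
    and card: "card (states P) + card (states N) = 6 * R + 4" "card (states P) \<noteq> card (states N)"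
    and "0 < R" "n \<le> R" "in_fragment Ops f\<^sub>0" "separating {P} {N} f\<^sub>0"
    and depth: "\<And>f. in_fragment Ops f \<Longrightarrow> separating {P} {N} f \<Longrightarrow> R * (2 ^ R - 1) \<le> modal_depth f"
  shows "hard_sample Ops n {P} {N}"
proof -
  have "P \<noteq> N" using card(2) by blast
  then have size: "(\<Sum>K\<in>{P} \<union> {N}. card (states K)) = 6 * R + 4"
    using card(1) by simp
  have "2 powr (real (6 * R + 4) / 25) \<le> real (sz f)"
    if "in_fragment Ops f" "separating {P} {N} f" for f
    using two_powr_le_sz[OF \<open>0 < R\<close> depth[OF that]] .
  with assms show ?thesis
    unfolding hard_sample_def size by auto
qed

lemma hard_sample_conjunctive_fragment:
  assumes "0 < R" "n \<le> R" "ONeg \<notin> Ops" "OOr \<notin> Ops" "\<forall>al k. ODia al k \<in> Ops \<longrightarrow> k \<le> 1"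
    and "OAtom Pp \<in> Ops" "Op_box \<subseteq> Ops"
  shows "hard_sample Ops n {counter_kripke R} {trap_kripke}"
proof (rule hard_sampleI)
  show "in_fragment Ops (boxes (counter_sequence R))"
    using ops_boxes assms(6,7) unfolding in_fragment_def by blast
  show "R * (2 ^ R - 1) \<le> modal_depth f"
    if "in_fragment Ops f" "separating {counter_kripke R} {trap_kripke} f" for f
  proof (rule modal_depth_distinguishing_counter_trap[OF assms(1)])
    show "conjunctive f"
      using that(1) assms(3-5) unfolding in_fragment_def by (intro conjunctiveI) auto
  qed (use that(2) in \<open>simp_all add: separating_def\<close>)
qed (simp_all add: assms(1,2) wf_counter_kripke wf_trap_kripke card_states_counter_kripke
    card_states_trap_kripke separating_boxes_counter_sequence)

lemma hard_sample_disjunctive_fragment: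
  assumes "0 < R" "n \<le> R" "ONeg \<notin> Ops" "OAnd \<notin> Ops" "\<forall>al k. ODia al k \<in> Ops \<longrightarrow> k = 1"
    and "OAtom Pp \<in> Ops" "Op_dia \<subseteq> Ops"
  shows "hard_sample Ops n {negate_kripke trap_kripke} {negate_kripke (counter_kripke R)}"
proof (rule hard_sampleI)
  show "in_fragment Ops (diamonds (counter_sequence R))"
    using ops_diamonds assms(6,7) unfolding in_fragment_def by blast
  show "R * (2 ^ R - 1) \<le> modal_depth f"
    if "in_fragment Ops f" "separating {negate_kripke trap_kripke} {negate_kripke (counter_kripke R)} f"
    for f
    using that assms(1,3-5) unfolding in_fragment_def
    by (intro modal_depth_distinguishing_negated) auto
qed (simp_all add: assms(1,2) wf_negate_kripke wf_counter_kripke wf_trap_kripke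
    card_states_counter_kripke card_states_trap_kripke separating_diamonds_counter_sequence)

theorem proposition5:
  fixes Ops :: "oper set"
  assumes "valid_ops Ops"
    and "monotone_frag Ops"
    and "OAtom Pp \<in> Ops"
    and "\<forall>al k. k \<ge> 2 \<longrightarrow> ODia al k \<notin> Ops"
    and "Op_box \<subseteq> Ops \<or> Op_dia \<subseteq> Ops"
    and "OAnd \<in> Ops \<longrightarrow> Op_box \<subseteq> Ops"
    and "OOr \<in> Ops \<longrightarrow> Op_dia \<subseteq> Ops"
  shows "\<forall>n::nat. \<exists>Pos Negs :: kripke set.
           finite Pos \<and> finite Negs \<and>
           (\<forall>K\<in>Pos \<union> Negs. wf_kripke K) \<and>
           (\<Sum>K\<in>Pos \<union> Negs. card (states K)) \<ge> n \<and>
           (\<exists>f. in_fragment Ops f \<and> separating Pos Negs f) \<and>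
           (\<forall>f. in_fragment Ops f \<and> separating Pos Negs f \<longrightarrow>
               2 powr (real (\<Sum>K\<in>Pos \<union> Negs. card (states K)) / 25) \<le> real (sz f))"
proof -
  have no_Neg: "ONeg \<notin> Ops"
    using assms(2) by (simp add: monotone_frag_def)
  have Dia_1: "\<forall>al k. ODia al k \<in> Ops \<longrightarrow> k = 1"
  proof (intro allI impI)
    fix al k assume "ODia al k \<in> Ops"
    with assms(1,4) have "1 \<le> k" "\<not> 2 \<le> k" by (auto simp: valid_ops_def)
    then show "k = 1" by simp
  qed
  consider (conjunctive) "OOr \<notin> Ops" "Op_box \<subseteq> Ops"
    | (disjunctive) "OAnd \<notin> Ops" "Op_dia \<subseteq> Ops"
    using assms(2,5-7) unfolding monotone_frag_def by blast
  then have "\<exists>Pos Negs. hard_sample Ops n Pos Negs" for n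
  proof cases
    case conjunctive
    then show ?thesis
      using hard_sample_conjunctive_fragment[of "Suc n" n Ops] no_Neg Dia_1 assms(3) by auto
  next
    case disjunctive
    then show ?thesis
      using hard_sample_disjunctive_fragment[of "Suc n" n Ops] no_Neg Dia_1 assms(3) by auto
  qed
  then show ?thesis
    by (simp add: hard_sample_def)
qed

end
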